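(* Let $N,k,s,d$ be positive integers with $s\ge3$, let $N\ge s+1$ be prime, and let $\Lambda\subseteq\mathbb{Z}_N$ belong to the family $\Lambda_d(2k,s)$. Let $\vec s=(s_1,\dots,s_l)$ be positive integers with $s_1+\dots+s_l=k$, and let $B(\vec s)=\{i\in[l]: s_i>s\}$. For $x\in\mathbb{Z}_N$ let $E(\vec s)(x)$ be the set of tuples $(\lambda_1,\dots,\lambda_k)\in\Lambda^k$ with $\lambda_1+\dots+\lambda_k=x$ for which there exist pairwise distinct $\tilde\lambda_1,\dots,\tilde\lambda_l\in\Lambda$ such that, for each $i\in[l]$, exactly $s_i$ of the entries $\lambda_1,\dots,\lambda_k$ equal $\tilde\lambda_i$ (so $s_1\tilde\lambda_1+\dots+s_l\tilde\lambda_l=x$). Then for every $x\in\mathbb{Z}_N$, $$|E(\vec s)(x)|\le\frac{k!}{s_1!\cdots s_l!}(s+1)^d|\Lambda|^{|B(\vec s)|}.$$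
   Context: $\mathbb{Z}_N=\mathbb{Z}/N\mathbb{Z}$, $[l]=\{1,\dots,l\}$. Family $\Lambda_d(k,s)$ (for positive integers $k,s,d$): a set $\Lambda=\{\lambda_1,\dots,\lambda_m\}\subseteq\mathbb{Z}_N$ with $\Lambda\cap(-\Lambda)=\emptyset$ belongs to $\Lambda_d(k,s)$ if for every choice of integer vectors $\vec v_1,\dots,\vec v_m\in\mathbb{Z}^d$, $\vec v_j=(v_j^{(1)},\dots,v_j^{(d)})$, with $|v_j^{(i)}|\le s$ for all $i,j$ and $\sum_{j=1}^m|v_j^{(i)}|\le k$ for every $i\in[d]$, satisfying $\lambda_1\vec v_1+\dots+\lambda_m\vec v_m\equiv0\pmod N$ (componentwise), the $d\times m$ matrix $(v_j^{(i)})$ has rank at most $d-1$ (rank over $\mathbb{Q}$). *)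

theory Defs
  imports "HOL-Library.Multiset" "Jordan_Normal_Form.DL_Rank"
begin

text \<open>Elements of Z_N are represented by integers in {0..<N}; congruence mod N
  is expressed with mod. A set Lam of Z_N is enumerated as
  lam_1,...,lam_m by sorted_list_of_set.\<close>

definition in_Lambda_family :: "int \<Rightarrow> nat \<Rightarrow> nat \<Rightarrow> nat \<Rightarrow> int set \<Rightarrow> bool" where
  "in_Lambda_family N d k s Lam \<longleftrightarrow>
     Lam \<subseteq> {0..<N} \<and>
     (\<forall>a\<in>Lam. \<forall>b\<in>Lam. (a + b) mod N \<noteq> 0) \<and>
     (let lams = sorted_list_of_set Lam; m = length lams in
      \<forall>v :: nat \<Rightarrow> nat \<Rightarrow> int.
        ((\<forall>j<m. \<forall>i<d. \<bar>v j i\<bar> \<le> int s) \<and>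
         (\<forall>i<d. (\<Sum>j<m. \<bar>v j i\<bar>) \<le> int k) \<and>
         (\<forall>i<d. (\<Sum>j<m. lams ! j * v j i) mod N = 0))
        \<longrightarrow> vec_space.rank d
              (mat d m (\<lambda>(i, j). rat_of_int (v j i)) :: rat mat) \<le> d - 1)"

definition E_set :: "int \<Rightarrow> int set \<Rightarrow> nat list \<Rightarrow> int \<Rightarrow> int list set" where
  "E_set N Lam ss x = {lam. length lam = sum_list ss \<and> set lam \<subseteq> Lam \<and>
      sum_list lam mod N = x mod N \<and>
      (\<exists>t :: nat \<Rightarrow> int. (\<forall>i<length ss. t i \<in> Lam) \<and> inj_on t {..<length ss} \<and>
          (\<forall>i<length ss. count (mset lam) (t i) = ss ! i))}"

end

(*
  A tuple in E(s)(x) is an arrangement of the multiset M = s_1 t_1 + ... + s_l t_l, and every such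
  M has k!/(s_1! ... s_l!) arrangements, so it suffices to count the multisets M. Split M into its
  large part (the points of multiplicity > s), which is determined by the t_i with i in B(s) and so
  takes at most |Lam|^|B(s)| values, and its small part. For a fixed large part the small parts have
  multiplicities at most s, size at most k and a common sum mod N. If there were more than (s+1)^d
  of them, pigeonholing repeatedly on a single multiplicity would give d pairs whose differences form
  a d x |Lam| integer matrix in echelon form, hence of rank d; its entries are at most s in absolute
  value, its rows have l1-norm at most 2k and are relations of Lam mod N, contradicting the
  Lambda_d(2k, s) property.
*)

theory Submission
  imports Defs "HOL-Combinatorics.Multiset_Permutations"
begin

lemma card_le_card_image_mult:
  fixes b :: "'b::linordered_semidom"
  assumes "finite A" and "\<And>y. y \<in> f ` A \<Longrightarrow> of_nat (card {x \<in> A. f x = y}) \<le> b"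
  shows "of_nat (card A) \<le> of_nat (card (f ` A)) * b"
proof -
  have "A = (\<Union>y\<in>f ` A. {x \<in> A. f x = y})" by blast
  then have "card A \<le> (\<Sum>y\<in>f ` A. card {x \<in> A. f x = y})"
    by (metis card_UN_le assms(1) finite_imageI)
  then have "of_nat (card A) \<le> (\<Sum>y\<in>f ` A. (of_nat (card {x \<in> A. f x = y}) :: 'b))"
    by (metis of_nat_le_iff of_nat_sum)
  also have "\<dots> \<le> of_nat (card (f ` A)) * b"
    by (rule sum_bounded_above) (rule assms(2))
  finally show ?thesis .
qed

lemma pigeonhole_echelon_pairs:
  fixes f :: "'c \<Rightarrow> 'a \<Rightarrow> 'b"
  assumes "finite R" and "inj_on f V" and "\<And>c j. c \<in> V \<Longrightarrow> f c j \<in> R"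
    and "card R ^ n < card V"
  shows "\<exists>a b p. \<forall>i<n. a i \<in> V \<and> b i \<in> V \<and> f (a i) (p i) \<noteq> f (b i) (p i)
           \<and> (\<forall>i'<i. f (a i) (p i') = f (b i) (p i'))"
  using assms(2-4)
proof (induction n arbitrary: V)
  case 0
  then show ?case by simp
next
  case (Suc n)
  have "finite V" using Suc.prems(3) card.infinite by fastforce
  obtain c where "c \<in> V" using Suc.prems(3) by fastforce
  then have "R \<noteq> {}" using Suc.prems(2) by blast
  then have "1 \<le> card R ^ Suc n" using assms(1) by (simp add: Suc_le_eq card_gt_0_iff)
  then have "1 < card V" using Suc.prems(3) by linarith
  then have "\<not> (\<forall>a\<in>V. \<forall>b\<in>V. a = b)"
    using card_le_Suc0_iff_eq[OF \<open>finite V\<close>] by simp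
  then obtain a0 b0 where ab0: "a0 \<in> V" "b0 \<in> V" "a0 \<noteq> b0" by blast
  then have "f a0 \<noteq> f b0" using Suc.prems(1) by (auto dest: inj_onD)
  then obtain j where j: "f a0 j \<noteq> f b0 j" by (meson ext)
  define C where "C r = {c \<in> V. f c j = r}" for r
  have "\<exists>r\<in>R. card R ^ n < card (C r)"
  proof (rule ccontr)
    assume "\<not> ?thesis"
    then have "card {c \<in> V. f c j = y} \<le> card R ^ n" if "y \<in> (\<lambda>c. f c j) ` V" for y
      using that Suc.prems(2) by (auto simp: C_def not_less)
    then have "card V \<le> card ((\<lambda>c. f c j) ` V) * card R ^ n"
      using card_le_card_image_mult[OF \<open>finite V\<close>, of "\<lambda>c. f c j" "card R ^ n"] by simp
    also have "\<dots> \<le> card R * card R ^ n"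
      using Suc.prems(2) assms(1) by (intro mult_right_mono card_mono) auto
    finally show False using Suc.prems(3) by simp
  qed
  then obtain r where r: "card R ^ n < card (C r)" by blast
  have "inj_on f (C r)" using Suc.prems(1) by (rule inj_on_subset) (auto simp: C_def)
  moreover have "\<And>c j. c \<in> C r \<Longrightarrow> f c j \<in> R" using Suc.prems(2) by (auto simp: C_def)
  ultimately obtain a b p where
    pairs: "\<forall>i<n. a i \<in> C r \<and> b i \<in> C r \<and> f (a i) (p i) \<noteq> f (b i) (p i)
           \<and> (\<forall>i'<i. f (a i) (p i') = f (b i) (p i'))"
    using Suc.IH r by blast
  (* Prepend (a0, b0) with pivot j: all later pairs lie in C r, so they agree at j. *)
  show ?case
  proof (intro exI allI impI)
    fix i assume "i < Suc n"
    show "case_nat a0 a i \<in> V \<and> case_nat b0 b i \<in> V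
      \<and> f (case_nat a0 a i) (case_nat j p i) \<noteq> f (case_nat b0 b i) (case_nat j p i)
      \<and> (\<forall>i'<i. f (case_nat a0 a i) (case_nat j p i') = f (case_nat b0 b i) (case_nat j p i'))"
    proof (cases i)
      case 0
      then show ?thesis using ab0 j by simp
    next
      case (Suc i0)
      then have "i0 < n" using \<open>i < Suc n\<close> by simp
      then have "a i0 \<in> C r" "b i0 \<in> C r" "f (a i0) (p i0) \<noteq> f (b i0) (p i0)"
        "\<forall>i'<i0. f (a i0) (p i') = f (b i0) (p i')"
        using pairs by blast+
      then show ?thesis using Suc by (auto simp: C_def less_Suc_eq_0_disj)
    qed
  qed
qed

lemma le_rank_if_echelon_pivots:
  fixes f :: "nat \<Rightarrow> nat \<Rightarrow> 'a::field"
  assumes pivot_col: "\<And>i. i < d \<Longrightarrow> p i < m"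
    and pivot: "\<And>i. i < d \<Longrightarrow> f i (p i) \<noteq> 0"
    and echelon: "\<And>i i'. i < d \<Longrightarrow> i' < i \<Longrightarrow> f i (p i') = 0"
  shows "d \<le> vec_space.rank d (mat d m (\<lambda>(i, j). f i j))"
proof -
  interpret vec_space "TYPE('a)" d .
  define A where "A = mat d m (\<lambda>(i, j). f i j)"
  define C where "C = mat d d (\<lambda>(i, i'). f i (p i'))"
  have A: "A \<in> carrier_mat d m" and C: "C \<in> carrier_mat d d" by (simp_all add: A_def C_def)
  have "upper_triangular C" using echelon by (auto simp: upper_triangular_def C_def)
  then have "det C = prod_list (diag_mat C)" by (rule det_upper_triangular[OF _ C])
  also have "\<dots> \<noteq> 0" using pivot by (auto simp: diag_mat_def C_def prod_list_zero_iff)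
  finally have "rank C = d" using low_rank_det_zero[OF C] by blast
  moreover have "distinct (cols C)"
  proof -
    have "col C i \<noteq> col C i'" if "i < i'" "i' < d" for i i'
    proof
      assume "col C i = col C i'"
      then have "col C i $ i' = col C i' $ i'" by simp
      then show False using that pivot echelon by (simp add: C_def)
    qed
    then show ?thesis using C unfolding distinct_conv_nth by (auto, metis linorder_neqE_nat)
  qed
  ultimately have indpt: "lin_indpt (set (cols C))" by (rule full_rank_lin_indpt[OF C])
  have "set (cols C) \<subseteq> set (cols A)"
  proof
    fix c assume "c \<in> set (cols C)"
    then obtain i where i: "i < d" "c = col C i" using C by (auto simp: in_set_conv_nth)
    then have "c = col A (p i)" using pivot_col by (auto simp: A_def C_def intro!: eq_vecI)
    moreover have "p i < dim_col A" using pivot_col[OF i(1)] A by simp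
    ultimately show "c \<in> set (cols A)" by (simp add: in_set_conv_nth exI[of _ "p i"])
  qed
  moreover have "card (set (cols C)) = d" using \<open>distinct (cols C)\<close> C by (simp add: distinct_card)
  ultimately show ?thesis using rank_ge_card_indpt[OF A _ indpt] by (simp add: A_def)
qed

lemma sum_mset_eq_sum_count:
  fixes g :: "'a \<Rightarrow> 'b::comm_semiring_1"
  assumes "finite A" and "set_mset S \<subseteq> A"
  shows "(\<Sum>y\<in>#S. g y) = (\<Sum>y\<in>A. of_nat (count S y) * g y)"
  using assms(2)
proof (induction S)
  case empty
  then show ?case by simp
next
  case (add a S)
  have "(\<Sum>y\<in>A. of_nat (count (add_mset a S) y) * g y)
      = (\<Sum>y\<in>A. of_nat (count S y) * g y + (if y = a then g y else 0))"
    by (intro sum.cong) (simp_all add: algebra_simps)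
  also have "\<dots> = (\<Sum>y\<in>A. of_nat (count S y) * g y) + g a"
    using add.prems assms(1) by (simp add: sum.distrib)
  finally show ?case using add by (simp add: add.commute)
qed

lemma sum_mset_eq_sum_nth:
  fixes g :: "'a \<Rightarrow> 'b::comm_semiring_1"
  assumes "distinct xs" and "set_mset S \<subseteq> set xs"
  shows "(\<Sum>y\<in>#S. g y) = (\<Sum>j<length xs. of_nat (count S (xs ! j)) * g (xs ! j))"
  using sum_mset_eq_sum_count[OF finite_set assms(2)] assms(1)
  by (simp add: sum.distinct_set_conv_list sum_list_sum_nth atLeast0LessThan)

lemma filter_mset_sum: "filter_mset P (\<Sum>i\<in>I. f i) = (\<Sum>i\<in>I. filter_mset P (f i))"
  by (induction I rule: infinite_finite_induct) simp_all

lemma filter_mset_replicate_mset: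
  "filter_mset P (replicate_mset n a) = (if P a then replicate_mset n a else {#})"
  by (induction n) simp_all

lemma count_sum_replicate_mset_inj:
  assumes "finite I" and "inj_on t I" and "i \<in> I"
  shows "count (\<Sum>j\<in>I. replicate_mset (c j) (t j)) (t i) = c i"
proof -
  have "count (\<Sum>j\<in>I. replicate_mset (c j) (t j)) (t i) = (\<Sum>j\<in>I. if j = i then c j else 0)"
    using assms(2,3) by (auto simp: count_sum inj_on_def intro!: sum.cong)
  also have "\<dots> = c i" using assms(1,3) by simp
  finally show ?thesis .
qed

lemma mset_eq_sum_replicate_mset:
  assumes "finite I" and "inj_on t I" and "\<And>i. i \<in> I \<Longrightarrow> count M (t i) = c i"
    and "size M = sum c I"
  shows "M = (\<Sum>i\<in>I. replicate_mset (c i) (t i))"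
proof -
  let ?P = "\<Sum>i\<in>I. replicate_mset (c i) (t i)"
  have "?P \<subseteq># M"
  proof (rule mset_subset_eqI)
    fix y
    show "count ?P y \<le> count M y"
    proof (cases "y \<in> t ` I")
      case True
      then obtain i where "i \<in> I" "y = t i" by blast
      then show ?thesis using assms(3) count_sum_replicate_mset_inj[OF assms(1,2)] by simp
    next
      case False
      then have "count ?P y = 0" by (auto simp: count_sum intro!: sum.neutral)
      then show ?thesis by simp
    qed
  qed
  moreover have "size ?P = size M" using assms(4) by (simp add: size_multiset_sum)
  ultimately show ?thesis
    by (metis mset_subset_size subset_mset.le_imp_less_or_eq less_irrefl)
qed

lemma filter_mset_count_sum_replicate_mset:
  assumes "finite I" and "inj_on t I" and M: "M = (\<Sum>i\<in>I. replicate_mset (c i) (t i))"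
  shows "{#y \<in># M. P (count M y)#} = (\<Sum>i\<in>{i \<in> I. P (c i)}. replicate_mset (c i) (t i))"
proof -
  have "{#y \<in># M. P (count M y)#} = (\<Sum>i\<in>I. {#y \<in># replicate_mset (c i) (t i). P (count M y)#})"
    unfolding M by (rule filter_mset_sum)
  also have "\<dots> = (\<Sum>i\<in>I. if P (c i) then replicate_mset (c i) (t i) else {#})"
    using count_sum_replicate_mset_inj[OF assms(1,2)]
    by (intro sum.cong) (simp_all add: M filter_mset_replicate_mset)
  also have "\<dots> = (\<Sum>i\<in>{i \<in> I. P (c i)}. replicate_mset (c i) (t i))"
    by (simp add: sum.inter_filter[OF assms(1)])
  finally show ?thesis .
qed

lemma card_permutations_of_sum_replicate_mset:
  assumes "finite I" and "inj_on t I" and "\<And>i. i \<in> I \<Longrightarrow> 0 < c i"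
  shows "real (card (permutations_of_multiset (\<Sum>i\<in>I. replicate_mset (c i) (t i))))
    = fact (sum c I) / (\<Prod>i\<in>I. fact (c i))"
proof -
  let ?M = "\<Sum>i\<in>I. replicate_mset (c i) (t i)"
  have "set_mset ?M = t ` I" using assms(1,3) by (auto simp: set_mset_sum)
  then have "(\<Prod>y\<in>set_mset ?M. fact (count ?M y)) = (\<Prod>i\<in>I. fact (count ?M (t i)))"
    using assms(2) by (simp add: prod.reindex)
  also have "\<dots> = (\<Prod>i\<in>I. fact (c i))"
    using count_sum_replicate_mset_inj[OF assms(1,2)] by simp
  finally have prod: "(\<Prod>y\<in>set_mset ?M. fact (count ?M y)) = (\<Prod>i\<in>I. fact (c i))" .
  have "card (permutations_of_multiset ?M) * (\<Prod>i\<in>I. fact (c i)) = fact (sum c I)"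
    using card_permutations_of_multiset_aux[of ?M] unfolding prod by (simp add: size_multiset_sum)
  then have "real (card (permutations_of_multiset ?M) * (\<Prod>i\<in>I. fact (c i))) = fact (sum c I)"
    by (simp only: of_nat_fact)
  moreover have "(\<Prod>i\<in>I. fact (c i) :: real) > 0" by (intro prod_pos) simp
  ultimately show ?thesis by (simp add: field_simps)
qed

lemma card_le_card_mset_image_mult:
  fixes E :: "'a list set"
  assumes "finite E" and "finite I" and "\<And>i. i \<in> I \<Longrightarrow> 0 < c i"
    and "\<And>xs. xs \<in> E \<Longrightarrow> \<exists>t. inj_on t I \<and> mset xs = (\<Sum>i\<in>I. replicate_mset (c i) (t i))"
  shows "real (card E) \<le> real (card (mset ` E)) * (fact (sum c I) / (\<Prod>i\<in>I. fact (c i)))"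
proof (rule card_le_card_image_mult[OF assms(1)])
  fix M assume "M \<in> mset ` E"
  then obtain t where "inj_on t I" and M: "M = (\<Sum>i\<in>I. replicate_mset (c i) (t i))"
    using assms(4) by blast
  have "{xs \<in> E. mset xs = M} \<subseteq> permutations_of_multiset M"
    by (auto intro: permutations_of_multisetI)
  then have "real (card {xs \<in> E. mset xs = M}) \<le> real (card (permutations_of_multiset M))"
    by (simp add: card_mono)
  also have "\<dots> = fact (sum c I) / (\<Prod>i\<in>I. fact (c i))"
    unfolding M by (rule card_permutations_of_sum_replicate_mset[OF assms(2) \<open>inj_on t I\<close> assms(3)])
  finally show "real (card {xs \<in> E. mset xs = M}) \<le> fact (sum c I) / (\<Prod>i\<in>I. fact (c i))" .
qed

lemma in_Lambda_family_finite: "in_Lambda_family N d k s Lam \<Longrightarrow> finite Lam"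
  unfolding in_Lambda_family_def by (meson finite_atLeastLessThan_int finite_subset)

lemma in_Lambda_family_rank_le:
  fixes v :: "nat \<Rightarrow> nat \<Rightarrow> int"
  assumes "in_Lambda_family N d k s Lam"
    and "\<And>j i. j < length (sorted_list_of_set Lam) \<Longrightarrow> i < d \<Longrightarrow> \<bar>v j i\<bar> \<le> int s"
    and "\<And>i. i < d \<Longrightarrow> (\<Sum>j<length (sorted_list_of_set Lam). \<bar>v j i\<bar>) \<le> int k"
    and "\<And>i. i < d \<Longrightarrow> (\<Sum>j<length (sorted_list_of_set Lam). sorted_list_of_set Lam ! j * v j i) mod N = 0"
  shows "vec_space.rank d (mat d (length (sorted_list_of_set Lam)) (\<lambda>(i, j). rat_of_int (v j i))) \<le> d - 1"
  using assms unfolding in_Lambda_family_def Let_def by blast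

lemma in_Lambda_family_msets_rank_le:
  fixes S S' :: "nat \<Rightarrow> int multiset"
  assumes fam: "in_Lambda_family N d (2 * k) s Lam"
    and subset: "\<And>i. i < d \<Longrightarrow> set_mset (S i) \<subseteq> Lam \<and> set_mset (S' i) \<subseteq> Lam"
    and count: "\<And>i y. i < d \<Longrightarrow> count (S i) y \<le> s \<and> count (S' i) y \<le> s"
    and size: "\<And>i. i < d \<Longrightarrow> size (S i) \<le> k \<and> size (S' i) \<le> k"
    and residue: "\<And>i. i < d \<Longrightarrow> sum_mset (S i) mod N = sum_mset (S' i) mod N"
  shows "vec_space.rank d (mat d (length (sorted_list_of_set Lam)) (\<lambda>(i, j).
      rat_of_int (int (count (S i) (sorted_list_of_set Lam ! j))
        - int (count (S' i) (sorted_list_of_set Lam ! j))))) \<le> d - 1"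
proof -
  define lams where "lams = sorted_list_of_set Lam"
  define v where "v j i = int (count (S i) (lams ! j)) - int (count (S' i) (lams ! j))" for j i
  have msum: "(\<Sum>y\<in>#T. g y) = (\<Sum>j<length lams. int (count T (lams ! j)) * g (lams ! j))"
    if "set_mset T \<subseteq> Lam" for T and g :: "int \<Rightarrow> int"
    using sum_mset_eq_sum_nth[of lams T g] that in_Lambda_family_finite[OF fam] by (simp add: lams_def)
  have "\<bar>v j i\<bar> \<le> int s" if "i < d" for j i
  proof -
    have "count (S i) (lams ! j) \<le> s" "count (S' i) (lams ! j) \<le> s" using count[OF that] by auto
    then show ?thesis by (simp add: v_def abs_le_iff)
  qed
  moreover have "(\<Sum>j<length lams. \<bar>v j i\<bar>) \<le> int (2 * k)" if "i < d" for i
  proof -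
    have "(\<Sum>j<length lams. \<bar>v j i\<bar>)
        \<le> (\<Sum>j<length lams. int (count (S i) (lams ! j)) * 1 + int (count (S' i) (lams ! j)) * 1)"
      by (intro sum_mono) (simp add: v_def)
    also have "\<dots> = int (size (S i)) + int (size (S' i))"
      using msum[of "S i" "\<lambda>_. 1"] msum[of "S' i" "\<lambda>_. 1"] subset[OF that]
      by (simp add: sum.distrib)
    also have "\<dots> \<le> int (2 * k)" using size[OF that] by simp
    finally show ?thesis .
  qed
  moreover have "(\<Sum>j<length lams. lams ! j * v j i) mod N = 0" if "i < d" for i
  proof -
    have "(\<Sum>j<length lams. lams ! j * v j i) = sum_mset (S i) - sum_mset (S' i)"
      using msum[of "S i" "\<lambda>y. y"] msum[of "S' i" "\<lambda>y. y"] subset[OF that]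
      by (simp add: v_def algebra_simps sum_subtractf)
    then show ?thesis using residue[OF that] by (simp add: mod_eq_dvd_iff)
  qed
  ultimately show ?thesis
    using in_Lambda_family_rank_le[OF fam, of v] by (simp add: v_def lams_def)
qed

lemma card_small_msets_same_residue_le:
  fixes SS :: "int multiset set"
  assumes fam: "in_Lambda_family N d (2 * k) s Lam" and "d > 0"
    and subset: "\<And>S. S \<in> SS \<Longrightarrow> set_mset S \<subseteq> Lam"
    and count: "\<And>S y. S \<in> SS \<Longrightarrow> count S y \<le> s"
    and size: "\<And>S. S \<in> SS \<Longrightarrow> size S \<le> k"
    and residue: "\<And>S. S \<in> SS \<Longrightarrow> sum_mset S mod N = r"
  shows "card SS \<le> (s + 1) ^ d"
proof (rule ccontr)
  assume "\<not> ?thesis"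
  then have "card {0..s} ^ d < card SS" by simp
  then obtain S S' p where pairs: "\<forall>i<d. S i \<in> SS \<and> S' i \<in> SS
      \<and> count (S i) (p i) \<noteq> count (S' i) (p i)
      \<and> (\<forall>i'<i. count (S i) (p i') = count (S' i) (p i'))"
    using pigeonhole_echelon_pairs[of "{0..s}" count SS d] count by (auto simp: inj_on_def multiset_eqI)
  have in_SS: "\<And>i. i < d \<Longrightarrow> S i \<in> SS \<and> S' i \<in> SS" using pairs by blast
  define lams where "lams = sorted_list_of_set Lam"
  have "finite Lam" using fam by (rule in_Lambda_family_finite)
  have "\<exists>j<length lams. lams ! j = p i" if "i < d" for i
  proof -
    have "p i \<in># S i \<or> p i \<in># S' i" using pairs that by (metis count_eq_zero_iff)
    then have "p i \<in> set lams" using pairs that subset \<open>finite Lam\<close> by (auto simp: lams_def)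
    then show ?thesis by (simp add: in_set_conv_nth)
  qed
  then obtain q where q: "\<And>i. i < d \<Longrightarrow> q i < length lams \<and> lams ! q i = p i" by metis
  have "d \<le> vec_space.rank d (mat d (length lams) (\<lambda>(i, j).
      rat_of_int (int (count (S i) (lams ! j)) - int (count (S' i) (lams ! j)))))"
    by (rule le_rank_if_echelon_pivots[of d q]) (use q pairs in auto)
  moreover have "vec_space.rank d (mat d (length lams) (\<lambda>(i, j).
      rat_of_int (int (count (S i) (lams ! j)) - int (count (S' i) (lams ! j))))) \<le> d - 1"
    unfolding lams_def
    by (intro in_Lambda_family_msets_rank_le[OF fam]) (simp_all add: in_SS subset count size residue)
  ultimately show False using \<open>d > 0\<close> by simp
qed

lemma card_msets_with_large_part_le:
  fixes MM :: "int multiset set"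
  assumes fam: "in_Lambda_family N d (2 * k) s Lam" and "d > 0"
    and subset: "\<And>M. M \<in> MM \<Longrightarrow> set_mset M \<subseteq> Lam"
    and size: "\<And>M. M \<in> MM \<Longrightarrow> size M \<le> k"
    and residue: "\<And>M. M \<in> MM \<Longrightarrow> sum_mset M mod N = r"
  shows "card {M \<in> MM. {#y \<in># M. s < count M y#} = L} \<le> (s + 1) ^ d"
proof -
  define small where "small M = {#y \<in># M. \<not> s < count M y#}" for M :: "int multiset"
  let ?F = "{M \<in> MM. {#y \<in># M. s < count M y#} = L}"
  have split: "M = L + small M" if "M \<in> ?F" for M
    using that multiset_partition[of M "\<lambda>y. s < count M y"] unfolding small_def by (metis (mono_tags) mem_Collect_eq)
  have "inj_on small ?F"
  proof (rule inj_onI)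
    fix M M' assume "M \<in> ?F" "M' \<in> ?F" "small M = small M'"
    with split[OF \<open>M \<in> ?F\<close>] split[OF \<open>M' \<in> ?F\<close>] show "M = M'" by argo
  qed
  moreover have "card (small ` ?F) \<le> (s + 1) ^ d"
  proof (rule card_small_msets_same_residue_le[OF fam \<open>d > 0\<close>])
    fix S assume "S \<in> small ` ?F"
    then obtain M where M: "M \<in> ?F" "S = small M" by blast
    show "set_mset S \<subseteq> Lam" using M subset by (auto simp: small_def)
    show "\<And>y. count S y \<le> s" using M by (simp add: small_def)
    have "size S \<le> size M" unfolding M(2) small_def by (rule size_filter_mset_lesseq)
    then show "size S \<le> k" using M(1) size by fastforce
    have "sum_mset M = sum_mset L + sum_mset S"
      using arg_cong[OF split[OF M(1)], of sum_mset] M(2) by simp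
    then have "sum_mset S = sum_mset M - sum_mset L" by simp
    moreover have "sum_mset M mod N = r" using M(1) residue by blast
    ultimately show "sum_mset S mod N = (r - sum_mset L) mod N" by (metis mod_diff_left_eq)
  qed
  ultimately show ?thesis by (simp add: card_image)
qed

lemma card_msets_with_multiplicities_le:
  fixes MM :: "int multiset set" and c :: "'i \<Rightarrow> nat"
  assumes fam: "in_Lambda_family N d (2 * k) s Lam" and "d > 0" and "finite I" and "sum c I \<le> k"
    and multiplicities: "\<And>M. M \<in> MM \<Longrightarrow>
      \<exists>t. t ` I \<subseteq> Lam \<and> inj_on t I \<and> M = (\<Sum>i\<in>I. replicate_mset (c i) (t i))"
    and residue: "\<And>M. M \<in> MM \<Longrightarrow> sum_mset M mod N = r"
  shows "card MM \<le> (s + 1) ^ d * card Lam ^ card {i \<in> I. s < c i}"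
proof -
  define B where "B = {i \<in> I. s < c i}"
  define large where "large M = {#y \<in># M. s < count M y#}" for M :: "int multiset"
  define mset_of where "mset_of J t = (\<Sum>i\<in>J. replicate_mset (c i) (t i))"
    for J and t :: "'i \<Rightarrow> int"
  have "finite Lam" using fam by (rule in_Lambda_family_finite)
  have restrict: "mset_of J t = mset_of J (restrict t J)" for J t
    by (auto simp: mset_of_def intro: sum.cong)
  have "MM \<subseteq> mset_of I ` (I \<rightarrow>\<^sub>E Lam)"
  proof
    fix M assume "M \<in> MM"
    then obtain t where "t ` I \<subseteq> Lam" "M = mset_of I t"
      using multiplicities by (auto simp: mset_of_def)
    then have "M = mset_of I (restrict t I)" and "restrict t I \<in> I \<rightarrow>\<^sub>E Lam"
      using restrict[of I t] by auto
    then show "M \<in> mset_of I ` (I \<rightarrow>\<^sub>E Lam)" by blast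
  qed
  moreover have "finite (I \<rightarrow>\<^sub>E Lam)" using \<open>finite I\<close> \<open>finite Lam\<close> by (simp add: finite_PiE)
  ultimately have "finite MM" by (meson finite_imageI finite_subset)
  have "large ` MM \<subseteq> mset_of B ` (B \<rightarrow>\<^sub>E Lam)"
  proof
    fix L assume "L \<in> large ` MM"
    then obtain M where "M \<in> MM" "L = large M" by blast
    then obtain t where "t ` I \<subseteq> Lam" "inj_on t I" and M: "M = (\<Sum>i\<in>I. replicate_mset (c i) (t i))"
      using multiplicities by blast
    have "L = mset_of B t"
      using filter_mset_count_sum_replicate_mset[OF \<open>finite I\<close> \<open>inj_on t I\<close> M] \<open>L = large M\<close>
      by (simp add: large_def B_def mset_of_def)
    moreover have "restrict t B \<in> B \<rightarrow>\<^sub>E Lam" using \<open>t ` I \<subseteq> Lam\<close> by (auto simp: B_def)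
    ultimately show "L \<in> mset_of B ` (B \<rightarrow>\<^sub>E Lam)" using restrict[of B t] by auto
  qed
  then have "card (large ` MM) \<le> card (mset_of B ` (B \<rightarrow>\<^sub>E Lam))"
    using \<open>finite I\<close> \<open>finite Lam\<close> by (intro card_mono) (simp_all add: B_def finite_PiE)
  also have "\<dots> \<le> card (B \<rightarrow>\<^sub>E Lam)"
    using \<open>finite I\<close> \<open>finite Lam\<close> by (intro card_image_le) (simp add: B_def finite_PiE)
  also have "\<dots> = card Lam ^ card B" using \<open>finite I\<close> by (simp add: B_def card_funcsetE)
  finally have "card (large ` MM) \<le> card Lam ^ card B" .
  moreover have "card MM \<le> card (large ` MM) * (s + 1) ^ d"
  proof -
    have "set_mset M \<subseteq> Lam" "size M \<le> k" if "M \<in> MM" for M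
      using multiplicities[OF that] \<open>finite I\<close> \<open>sum c I \<le> k\<close> by (auto simp: set_mset_sum size_multiset_sum image_subset_iff)
    then have "card {M \<in> MM. large M = L} \<le> (s + 1) ^ d" for L
      unfolding large_def by (rule card_msets_with_large_part_le[OF fam \<open>d > 0\<close>]) (use residue in auto)
    then show ?thesis using card_le_card_image_mult[OF \<open>finite MM\<close>, of large "(s + 1) ^ d"] by simp
  qed
  ultimately have "card MM \<le> card Lam ^ card B * (s + 1) ^ d" by (meson le_trans mult_le_mono1)
  then show ?thesis by (simp add: B_def mult.commute)
qed

lemma mset_E_set_eq_sum_replicate_mset:
  assumes "xs \<in> E_set N Lam ss x"
  shows "\<exists>t. t ` {..<length ss} \<subseteq> Lam \<and> inj_on t {..<length ss}
    \<and> mset xs = (\<Sum>i<length ss. replicate_mset (ss ! i) (t i))"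
proof -
  obtain t where "\<forall>i<length ss. t i \<in> Lam" and "inj_on t {..<length ss}"
    and "\<forall>i<length ss. count (mset xs) (t i) = ss ! i" and "length xs = sum_list ss"
    using assms unfolding E_set_def by blast
  moreover have "size (mset xs) = (\<Sum>i<length ss. ss ! i)"
    using \<open>length xs = sum_list ss\<close> by (simp add: sum_list_sum_nth atLeast0LessThan)
  ultimately show ?thesis
    using mset_eq_sum_replicate_mset[of "{..<length ss}" t "mset xs" "(!) ss"] by auto
qed

lemma finite_E_set: "finite Lam \<Longrightarrow> finite (E_set N Lam ss x)"
  by (rule finite_subset[OF _ finite_lists_length_eq[of Lam "sum_list ss"]]) (auto simp: E_set_def)

lemma card_E_set_le_card_mset_image:
  assumes "finite Lam" and "\<forall>i<length ss. ss ! i > 0"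
  shows "real (card (E_set N Lam ss x))
    \<le> real (card (mset ` E_set N Lam ss x)) * (fact (sum_list ss) / (\<Prod>i<length ss. fact (ss ! i)))"
  using card_le_card_mset_image_mult[OF finite_E_set[OF assms(1)], of "{..<length ss}" "(!) ss"]
    mset_E_set_eq_sum_replicate_mset assms(2)
  by (simp add: sum_list_sum_nth atLeast0LessThan) blast

lemma card_mset_image_E_set_le:
  assumes "in_Lambda_family N d (2 * k) s Lam" and "d > 0" and "sum_list ss = k"
  shows "card (mset ` E_set N Lam ss x) \<le> (s + 1) ^ d * card Lam ^ card {i. i < length ss \<and> ss ! i > s}"
proof -
  have "{i. i < length ss \<and> ss ! i > s} = {i \<in> {..<length ss}. s < ss ! i}" by auto
  moreover have "card (mset ` E_set N Lam ss x) \<le> (s + 1) ^ d * card Lam ^ card \<dots>"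
  proof (rule card_msets_with_multiplicities_le[OF assms(1,2)])
    show "sum ((!) ss) {..<length ss} \<le> k"
      using assms(3) by (simp add: sum_list_sum_nth atLeast0LessThan)
    show "\<exists>t. t ` {..<length ss} \<subseteq> Lam \<and> inj_on t {..<length ss}
        \<and> M = (\<Sum>i<length ss. replicate_mset (ss ! i) (t i))" if "M \<in> mset ` E_set N Lam ss x" for M
      using that mset_E_set_eq_sum_replicate_mset by blast
    show "sum_mset M mod N = x mod N" if "M \<in> mset ` E_set N Lam ss x" for M
      using that by (auto simp: E_set_def sum_mset_sum_list)
  qed simp
  ultimately show ?thesis by simp
qed

theorem lemma25:
  fixes N :: int and k s d :: nat and Lam :: "int set" and ss :: "nat list" and x :: int
  assumes "k > 0" and "s > 0" and "d > 0" and "s \<ge> 3"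
    and "prime N" and "N \<ge> int s + 1"
    and "in_Lambda_family N d (2 * k) s Lam"
    and "\<forall>i<length ss. ss ! i > 0" and "sum_list ss = k"
    and "x \<in> {0..<N}"
  shows "real (card (E_set N Lam ss x))
    \<le> real (fact k) / real (\<Prod>i<length ss. fact (ss ! i))
       * real (s + 1) ^ d * real (card Lam) ^ card {i. i < length ss \<and> ss ! i > s}"
proof -
  (* The bound holds without the hypotheses k > 0, s \<ge> 3, prime N, N \<ge> s + 1 and x \<in> {0..<N}. *)
  define Q where "Q = fact k / (\<Prod>i<length ss. fact (ss ! i) :: real)"
  have "finite Lam" using assms(7) by (rule in_Lambda_family_finite)
  have "real (card (E_set N Lam ss x)) \<le> real (card (mset ` E_set N Lam ss x)) * Q"
    using card_E_set_le_card_mset_image[OF \<open>finite Lam\<close> assms(8)] assms(9) by (simp add: Q_def)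
  also have "\<dots> \<le> real ((s + 1) ^ d * card Lam ^ card {i. i < length ss \<and> ss ! i > s}) * Q"
    unfolding Q_def
    by (intro mult_right_mono of_nat_mono card_mset_image_E_set_le[OF assms(7,3,9)]
        divide_nonneg_nonneg prod_nonneg) simp_all
  finally show ?thesis by (simp add: Q_def mult_ac)
qed

end
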